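(* Fix integers $d\geq 2$ and $n\geq d+2$. For every configuration $X=\{x_i\}_{i\in[n]}$ in the unit sphere $S^{d-1}\subseteq\mathbb{R}^d$, if $\alpha(X)>0$ then $\delta(X)<1$.
   Context: $[n]=\{1,\ldots,n\}$. For a configuration $X=\{x_i\}_{i\in[n]}$ in $S^{d-1}$, $\alpha(X):=\max_{i\neq j}\langle x_i,x_j\rangle$ and $\delta(X):=\min_{j\in[n]}\operatorname{dist}(x_j,\operatorname{conv}\{x_i\}_{i\in[n]\setminus\{j\}})$, with Euclidean distance. *)

theory Defs
  imports "HOL-Analysis.Analysis"
begin

definition cfg_alpha :: "nat \<Rightarrow> (nat \<Rightarrow> 'a::real_inner) \<Rightarrow> real" where
  "cfg_alpha n X = Max {X i \<bullet> X j | i j. i \<in> {1..n} \<and> j \<in> {1..n} \<and> i \<noteq> j}"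

definition cfg_delta :: "nat \<Rightarrow> (nat \<Rightarrow> 'a::euclidean_space) \<Rightarrow> real" where
  "cfg_delta n X = Min ((\<lambda>j. infdist (X j) (convex hull (X ` ({1..n} - {j})))) ` {1..n})"

end

theory Submission
  imports Defs
begin

text \<open>
  Suppose every point of a configuration of \<open>n \<ge> d + 2\<close> unit vectors has distance at least 1
  from the convex hull of the others. The points are then distinct and, by Radon's theorem, split
  into two parts \<open>M\<close>, \<open>P\<close> whose convex hulls share a point \<open>z\<close>. Each \<open>x \<in> M\<close> has
  distance at least 1 from \<open>z \<in> conv P\<close>, i.e. \<open>2 z \<bullet> x \<le> |z|\<^sup>2\<close>; averaging over \<open>z \<in> conv M\<close>
  gives \<open>|z|\<^sup>2 \<le> 0\<close>, so \<open>z = 0\<close>. Hence the origin lies in the convex hull of all points but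
  any one \<open>x\<close>, and so does the segment from the origin to any other point \<open>y\<close>. A unit vector
  \<open>x\<close> that stays at distance at least 1 from this segment satisfies \<open>x \<bullet> y \<le> 0\<close>, so \<open>\<alpha>(X) \<le> 0\<close>.
\<close>

lemma inner_nonpos_if_segment_far:
  fixes x y :: "'a::real_inner"
  assumes "norm x = 1" "norm y = 1"
    and far: "\<forall>w \<in> closed_segment 0 y. 1 \<le> dist x w"
  shows "x \<bullet> y \<le> 0"
proof (rule ccontr)
  define a where "a = x \<bullet> y"
  assume "\<not> x \<bullet> y \<le> 0"
  then have "0 < a" by (simp add: a_def)
  moreover have "a \<le> 1"
    using norm_cauchy_schwarz[of x y] assms by (simp add: a_def)
  ultimately have "a *\<^sub>R y \<in> closed_segment 0 y"
    by (auto simp: in_segment intro!: exI[of _ a])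
  then have "1 \<le> (dist x (a *\<^sub>R y))\<^sup>2"
    using far by (simp add: one_le_power)
  also have "(dist x (a *\<^sub>R y))\<^sup>2 = x \<bullet> x - 2 * a * (x \<bullet> y) + a * a * (y \<bullet> y)"
    by (simp add: dist_norm power2_norm_eq_inner algebra_simps inner_commute)
  also have "\<dots> = 1 - a * a"
    using assms(1,2) by (simp add: a_def norm_eq_1)
  finally show False
    using mult_pos_pos[OF \<open>0 < a\<close> \<open>0 < a\<close>] by linarith
qed

lemma convex_hull_far_from_unit_ball_points_eq_0:
  fixes z :: "'a::real_inner"
  assumes "M \<subseteq> cball 0 1" "\<forall>x\<in>M. 1 \<le> dist x z" "z \<in> convex hull M"
  shows "z = 0"
proof -
  have "M \<subseteq> {x. z \<bullet> x \<le> (z \<bullet> z) / 2}"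
  proof
    fix x assume "x \<in> M"
    then have "x \<bullet> x \<le> 1" "1 \<le> (dist x z)\<^sup>2"
      using assms(1,2) by (auto simp: one_le_power power2_norm_eq_inner[symmetric] power_le_one)
    moreover have "(dist x z)\<^sup>2 = x \<bullet> x - 2 * (z \<bullet> x) + z \<bullet> z"
      by (simp add: dist_norm power2_norm_eq_inner algebra_simps inner_commute)
    ultimately show "x \<in> {x. z \<bullet> x \<le> (z \<bullet> z) / 2}" by simp
  qed
  then have "convex hull M \<subseteq> {x. z \<bullet> x \<le> (z \<bullet> z) / 2}"
    by (rule hull_minimal) (rule convex_halfspace_le)
  then have "z \<bullet> z \<le> 0"
    using assms(3) by auto
  then show "z = 0"
    by (metis inner_eq_zero_iff inner_ge_zero order_antisym)
qed

lemma zero_in_convex_hull_delete_if_far: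
  fixes c :: "'a::euclidean_space set"
  assumes "affine_dependent c" "c \<subseteq> cball 0 1"
    and far: "\<forall>x\<in>c. 1 \<le> infdist x (convex hull (c - {x}))"
    and "x \<in> c"
  shows "0 \<in> convex hull (c - {x})"
proof -
  obtain M P where MP: "M \<subseteq> c" "P \<subseteq> c" "M \<inter> P = {}"
      and "convex hull M \<inter> convex hull P \<noteq> {}"
    using Radon[OF assms(1)] by blast
  then obtain z where z: "z \<in> convex hull M" "z \<in> convex hull P" by blast
  have "1 \<le> dist x z" if "x \<in> M" for x
  proof -
    have "convex hull P \<subseteq> convex hull (c - {x})"
      using MP that by (intro hull_mono) auto
    then have "infdist x (convex hull (c - {x})) \<le> dist x z"
      using z(2) by (auto intro: infdist_le)
    then show ?thesis
      using far MP(1) that by force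
  qed
  then have "z = 0"
    using convex_hull_far_from_unit_ball_points_eq_0[of M z] MP(1) assms(2) z(1) by blast
  consider "x \<notin> M" | "x \<notin> P" using MP(3) by blast
  then show ?thesis
  proof cases
    case 1
    then have "convex hull M \<subseteq> convex hull (c - {x})"
      using MP(1) by (intro hull_mono) auto
    then show ?thesis using z(1) \<open>z = 0\<close> by auto
  next
    case 2
    then have "convex hull P \<subseteq> convex hull (c - {x})"
      using MP(2) by (intro hull_mono) auto
    then show ?thesis using z(2) \<open>z = 0\<close> by auto
  qed
qed

lemma inner_nonpos_if_far_from_convex_hulls:
  fixes c :: "'a::euclidean_space set"
  assumes "affine_dependent c" "c \<subseteq> sphere 0 1"
    and far: "\<forall>x\<in>c. 1 \<le> infdist x (convex hull (c - {x}))"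
    and "x \<in> c" "y \<in> c" "x \<noteq> y"
  shows "x \<bullet> y \<le> 0"
proof (rule inner_nonpos_if_segment_far)
  show "norm x = 1" "norm y = 1"
    using assms(2,4,5) by auto
  have "0 \<in> convex hull (c - {x})"
    using zero_in_convex_hull_delete_if_far[OF assms(1) _ far \<open>x \<in> c\<close>] assms(2)
    using sphere_cball by blast
  moreover have "y \<in> convex hull (c - {x})"
    using assms(5,6) by (intro hull_inc) auto
  ultimately have "closed_segment 0 y \<subseteq> convex hull (c - {x})"
    by (rule closed_segment_subset_convex_hull)
  then show "\<forall>w \<in> closed_segment 0 y. 1 \<le> dist x w"
    using far \<open>x \<in> c\<close> by (force intro: order_trans infdist_le)
qed

lemma cfg_delta_le_infdist:
  assumes "j \<in> {1..n}"
  shows "cfg_delta n X \<le> infdist (X j) (convex hull (X ` ({1..n} - {j})))"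
  unfolding cfg_delta_def using assms by (intro Min_le) auto

lemma inj_on_if_cfg_delta_pos:
  assumes "0 < cfg_delta n X"
  shows "inj_on X {1..n}"
proof (rule inj_onI, rule ccontr)
  fix i j assume ij: "i \<in> {1..n}" "j \<in> {1..n}" "X i = X j" "i \<noteq> j"
  then have "X j \<in> convex hull (X ` ({1..n} - {j}))"
    by (intro hull_inc) (metis DiffI image_eqI singletonD)
  then have "infdist (X j) (convex hull (X ` ({1..n} - {j}))) = 0" by simp
  then show False
    using cfg_delta_le_infdist[OF ij(2), of X] assms by simp
qed

lemma cfg_alpha_attained:
  assumes "2 \<le> n"
  obtains i j where "i \<in> {1..n}" "j \<in> {1..n}" "i \<noteq> j" "cfg_alpha n X = X i \<bullet> X j"
proof -
  define S where "S = {X i \<bullet> X j | i j. i \<in> {1..n} \<and> j \<in> {1..n} \<and> i \<noteq> j}"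
  have "S \<subseteq> (\<lambda>(i, j). X i \<bullet> X j) ` ({1..n} \<times> {1..n})"
    unfolding S_def by auto
  then have "finite S" by (rule finite_subset) simp
  moreover have "X 1 \<bullet> X 2 \<in> S"
    unfolding S_def using assms by force
  ultimately have "Max S \<in> S" by (intro Max_in) auto
  then show ?thesis
    using that unfolding cfg_alpha_def S_def[symmetric] by (auto simp: S_def)
qed

theorem lemma4:
  fixes X :: "nat \<Rightarrow> real ^ 'd" and n :: nat
  assumes "CARD('d) \<ge> 2"
    and "n \<ge> CARD('d) + 2"
    and "\<And>i. i \<in> {1..n} \<Longrightarrow> norm (X i) = 1"
    and "cfg_alpha n X > 0"
  shows "cfg_delta n X < 1"
proof (rule ccontr)
  assume "\<not> cfg_delta n X < 1"
  then have delta: "1 \<le> cfg_delta n X" by simp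
  define c where "c = X ` {1..n}"
  have inj: "inj_on X {1..n}"
    using delta by (intro inj_on_if_cfg_delta_pos) simp
  then have "affine_dependent c"
    using assms(2) by (intro affine_dependent_biggerset) (auto simp: c_def card_image)
  moreover have "c \<subseteq> sphere 0 1"
    using assms(3) by (auto simp: c_def)
  moreover have "\<forall>x\<in>c. 1 \<le> infdist x (convex hull (c - {x}))"
    using delta cfg_delta_le_infdist[of _ n X] inj_on_image_set_diff[OF inj, of _ "{_}"]
    by (force simp: c_def)
  moreover obtain i j where ij: "i \<in> {1..n}" "j \<in> {1..n}" "i \<noteq> j" "cfg_alpha n X = X i \<bullet> X j"
    using cfg_alpha_attained assms(2) by (metis add_leE)
  moreover have "X i \<noteq> X j"
    using inj ij by (meson inj_on_contraD)
  ultimately have "X i \<bullet> X j \<le> 0"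
    by (intro inner_nonpos_if_far_from_convex_hulls[of c]) (auto simp: c_def)
  then show False
    using assms(4) ij(4) by simp
qed

end
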